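(* Let $k\ge3$ and $n\ge k+2$, let $\ell=\lceil n/(k+1)\rceil-1$, and let $\mathcal{X}_{n,k}=(Q,\Sigma,\delta)$ with $Q=\{0,\dots,n-1\}$, $\Sigma=\{a_1,\dots,a_k\}$ and $\delta$ defined by: for each $0\le i\le\ell-1$ and $1\le j\le k$, $\delta((k+1)i,a_j)=(k+1)i+j$ and $\delta((k+1)i+1,a_1)=(k+1)(i+1)$; for each $i$ with $(k+1)\ell\le i\le n-2$, $\delta(i,a_1)=i+1$; and $\delta(i,a_j)=0$ for all remaining pairs $(i,a_j)$. Then $\mathcal{X}_{n,k}$ (which is the decoder of a maximal finite prefix code over $\Sigma$) is synchronizing and its reset threshold equals $2\ell+2=2\lceil n/(k+1)\rceil$.
   Context: For a DFA $(Q,\Sigma,\delta)$ with transitions extended to words, a reset word is a word $w$ with $|\{\delta(q,w)\mid q\in Q\}|=1$; the DFA is synchronizing if one exists, and its reset threshold is the length of a shortest reset word. *)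

theory Defs
  imports Complex_Main
begin

definition delta_word :: "('q \<Rightarrow> 'a \<Rightarrow> 'q) \<Rightarrow> 'q \<Rightarrow> 'a list \<Rightarrow> 'q" where
  "delta_word delta q w = foldl delta q w"

definition reset_word :: "'q set \<Rightarrow> 'a set \<Rightarrow> ('q \<Rightarrow> 'a \<Rightarrow> 'q) \<Rightarrow> 'a list \<Rightarrow> bool" where
  "reset_word Q Alph delta w \<longleftrightarrow>
     set w \<subseteq> Alph \<and> card ((\<lambda>q. delta_word delta q w) ` Q) = 1"

definition synchronizing :: "'q set \<Rightarrow> 'a set \<Rightarrow> ('q \<Rightarrow> 'a \<Rightarrow> 'q) \<Rightarrow> bool" where
  "synchronizing Q Alph delta \<longleftrightarrow> (\<exists>w. reset_word Q Alph delta w)"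

definition reset_threshold :: "'q set \<Rightarrow> 'a set \<Rightarrow> ('q \<Rightarrow> 'a \<Rightarrow> 'q) \<Rightarrow> nat" where
  "reset_threshold Q Alph delta = (LEAST m. \<exists>w. reset_word Q Alph delta w \<and> length w = m)"

text \<open>The automaton X_{n,k}: states {0..n-1}, letters a_1..a_k encoded as 1..k.\<close>

definition X_ell :: "nat \<Rightarrow> nat \<Rightarrow> nat" where
  "X_ell n k = nat \<lceil>real n / real (k + 1)\<rceil> - 1"

definition X_states :: "nat \<Rightarrow> nat set" where
  "X_states n = {0..<n}"

definition X_alphabet :: "nat \<Rightarrow> nat set" where
  "X_alphabet k = {1..k}"

definition X_delta :: "nat \<Rightarrow> nat \<Rightarrow> nat \<Rightarrow> nat \<Rightarrow> nat" where
  "X_delta n k q a =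
     (let l = X_ell n k in
      if (\<exists>i<l. q = (k+1)*i) \<and> 1 \<le> a \<and> a \<le> k then q + a
      else if (\<exists>i<l. q = (k+1)*i + 1) \<and> a = 1 then q + k
      else if (k+1)*l \<le> q \<and> q \<le> n - 2 \<and> a = 1 then q + 1
      else 0)"

end

theory Submission
  imports Defs
begin

text \<open>Measure a state by its depth, its distance from state 0. Below depth 2\<ell> every letter
either raises the depth by one or sends a state of odd depth to 0, so every letter flips the
parity of the depth; hence two states whose depths differ in parity are not merged by any word
that keeps both below depth 2\<ell>. Whatever the first letter of a reset word, it maps some pair of
states to 0 and a nonzero state killed by every letter (n - 1 or a leaf a_j, j \<ge> 2); one more
letter turns this pair into states of depth 1 and 0, so at least 2\<ell> + 1 further letters are needed.
Conversely a_2 a_1 maps everything into {0, 1}, then a_1^(2\<ell>-1) moves 0 and 1 to the states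
(k+1)(\<ell>-1)+1 and (k+1)\<ell>, and a_2 sends both to 0.\<close>

lemma delta_word_simps [simp]:
  "delta_word d q [] = q"
  "delta_word d q (a # w) = delta_word d (d q a) w"
  "delta_word d q (u @ w) = delta_word d (delta_word d q u) w"
  by (simp_all add: delta_word_def)

lemma reset_wordI:
  assumes "set w \<subseteq> A" "Q \<noteq> {}" "\<And>q. q \<in> Q \<Longrightarrow> delta_word d q w = c"
  shows "reset_word Q A d w"
proof -
  have "(\<lambda>q. delta_word d q w) ` Q = {c}" using assms(2,3) by auto
  then show ?thesis using assms(1) by (simp add: reset_word_def)
qed

lemma reset_word_merges:
  assumes "reset_word Q A d w" "p \<in> Q" "q \<in> Q"
  shows "delta_word d p w = delta_word d q w"
proof -
  obtain c where "(\<lambda>q. delta_word d q w) ` Q = {c}"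
    using assms(1) by (auto simp: reset_word_def card_1_singleton_iff)
  then show ?thesis using assms(2,3) by (metis imageI singletonD)
qed

lemma reset_threshold_eqI:
  assumes "reset_word Q A d w" "\<And>v. reset_word Q A d v \<Longrightarrow> length w \<le> length v"
  shows "reset_threshold Q A d = length w"
  unfolding reset_threshold_def by (rule Least_equality) (use assms in auto)

lemma mult_add_div_mod:
  fixes d i r :: nat
  assumes "r < d"
  shows "(d * i + r) div d = i" "(d * i + r) mod d = r"
  using assms by (simp_all add: add.commute)

lemma mult_add_eq_mult_add_iff:
  fixes d i j r s :: nat
  assumes "r < d" "s < d"
  shows "d * i + r = d * j + s \<longleftrightarrow> i = j \<and> r = s"
proof
  assume "d * i + r = d * j + s"
  then show "i = j \<and> r = s" using mult_add_div_mod assms by metis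
qed simp

locale X_automaton =
  fixes n k :: nat
  assumes two_le_k: "2 \<le> k" and n_gt: "k + 1 < n"
begin

abbreviation ell :: nat where "ell \<equiv> X_ell n k"
abbreviation \<delta> :: "nat \<Rightarrow> nat \<Rightarrow> nat" where "\<delta> \<equiv> X_delta n k"

lemma Suc_ell: "Suc ell = nat \<lceil>real n / real (k + 1)\<rceil>"
  and ell_pos: "1 \<le> ell"
  and blocks_less: "(k + 1) * ell < n"
proof -
  define c where "c = \<lceil>real n / real (k + 1)\<rceil>"
  have "real n / real (k + 1) > 1" using n_gt by simp
  then have "c \<ge> 2" unfolding c_def by linarith
  then have c: "c = int ell + 1" and "1 \<le> ell"
    unfolding X_ell_def c_def[symmetric] by simp_all
  then show "1 \<le> ell" "Suc ell = nat \<lceil>real n / real (k + 1)\<rceil>"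
    unfolding c_def[symmetric] by simp_all
  have "(real_of_int c - 1) * real (k + 1) < real n"
    unfolding c_def by (rule ceiling_divide_lower) simp
  then have "real (ell * (k + 1)) < real n" by (simp add: c algebra_simps)
  then show "(k + 1) * ell < n" by (simp only: of_nat_less_iff mult.commute)
qed

lemma block_less:
  assumes "i < ell" "r \<le> k"
  shows "(k + 1) * i + r < (k + 1) * ell"
proof -
  have "(k + 1) * i + r < (k + 1) * (i + 1)" using assms(2) by simp
  also have "\<dots> \<le> (k + 1) * ell" using assms(1) by (intro mult_le_mono2) simp
  finally show ?thesis .
qed

lemma obtain_block:
  assumes "q < (k + 1) * ell"
  obtains i r where "i < ell" "r \<le> k" "q = (k + 1) * i + r"
proof
  show "q = (k + 1) * (q div (k + 1)) + q mod (k + 1)" by (rule mult_div_mod_eq[symmetric])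
  show "q mod (k + 1) \<le> k" by (simp add: less_Suc_eq_le)
  show "q div (k + 1) < ell" using assms by (simp add: div_less_iff_less_mult mult.commute)
qed

lemma delta_block:
  assumes "i < ell" "r \<le> k" "1 \<le> a" "a \<le> k"
  shows "\<delta> ((k + 1) * i + r) a =
    (if r = 0 then (k + 1) * i + a else if r = 1 \<and> a = 1 then (k + 1) * (i + 1) else 0)"
proof -
  have r: "r < k + 1" and one: "1 < k + 1" using assms(2) two_le_k by simp_all
  have root: "(\<exists>j<ell. (k + 1) * i + r = (k + 1) * j) \<longleftrightarrow> r = 0"
  proof
    assume "\<exists>j<ell. (k + 1) * i + r = (k + 1) * j"
    then obtain j where "(k + 1) * i + r = (k + 1) * j + 0" by auto
    then show "r = 0" using mult_add_eq_mult_add_iff[OF r, of 0 i j] by simp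
  qed (use assms(1) in auto)
  have first: "(\<exists>j<ell. (k + 1) * i + r = (k + 1) * j + 1) \<longleftrightarrow> r = 1"
  proof
    assume "\<exists>j<ell. (k + 1) * i + r = (k + 1) * j + 1"
    then obtain j where "(k + 1) * i + r = (k + 1) * j + 1" by auto
    then show "r = 1" using mult_add_eq_mult_add_iff[OF r one, of i j] by simp
  qed (use assms(1) in auto)
  have "\<not> (k + 1) * ell \<le> (k + 1) * i + r" using block_less[OF assms(1,2)] by simp
  then have "\<delta> ((k + 1) * i + r) a =
      (if r = 0 \<and> 1 \<le> a \<and> a \<le> k then (k + 1) * i + r + a
       else if r = 1 \<and> a = 1 then (k + 1) * i + r + k else 0)"
    unfolding X_delta_def Let_def root first by (simp only: simp_thms if_False)
  then show ?thesis using assms(3,4) by simp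
qed

lemma delta_tail:
  assumes "(k + 1) * ell \<le> q"
  shows "\<delta> q a = (if q \<le> n - 2 \<and> a = 1 then q + 1 else 0)"
proof -
  have no_block: "q \<noteq> (k + 1) * i + c" if "i < ell" "c \<le> k" for i c
    using block_less[OF that] assms by simp
  have "(\<exists>i<ell. q = (k + 1) * i) = False" using no_block[of _ 0] by auto
  moreover have "(\<exists>i<ell. q = (k + 1) * i + 1) = False" using no_block[of _ 1] two_le_k by auto
  ultimately show ?thesis
    using assms unfolding X_delta_def Let_def by (simp only: simp_thms if_False if_True)
qed

definition depth :: "nat \<Rightarrow> nat" where
  "depth q = (if q < (k + 1) * ell then 2 * (q div (k + 1)) + (if q mod (k + 1) = 0 then 0 else 1)
              else 2 * ell + (q - (k + 1) * ell))"

lemma depth_block: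
  assumes "i < ell" "r \<le> k"
  shows "depth ((k + 1) * i + r) = 2 * i + (if r = 0 then 0 else 1)"
proof -
  have "r < k + 1" using assms(2) by simp
  note mult_add_div_mod[OF this, of i]
  then show ?thesis unfolding depth_def if_P[OF block_less[OF assms]] by simp
qed

lemma depth_tail: "depth ((k + 1) * ell + t) = 2 * ell + t"
  by (simp add: depth_def)

lemma depth_zero: "depth 0 = 0"
  using depth_block[of 0 0] ell_pos by simp

lemma depth_letter:
  assumes "1 \<le> a" "a \<le> k"
  shows "depth a = 1"
  using depth_block[of 0 a] ell_pos assms by simp

lemma less_blocks_if_depth_less:
  assumes "depth q < 2 * ell"
  shows "q < (k + 1) * ell"
  using assms by (auto simp: depth_def split: if_splits)

lemma depth_delta:
  assumes "depth q < 2 * ell" "1 \<le> a" "a \<le> k"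
  shows "depth (\<delta> q a) \<le> Suc (depth q)" "even (depth (\<delta> q a)) \<longleftrightarrow> odd (depth q)"
proof -
  obtain i r where i: "i < ell" and r: "r \<le> k" and q: "q = (k + 1) * i + r"
    using obtain_block[OF less_blocks_if_depth_less[OF assms(1)]] .
  have "depth (\<delta> q a) = Suc (depth q) \<or> (\<delta> q a = 0 \<and> odd (depth q))"
  proof (cases "r = 0")
    case True
    then show ?thesis
      using q delta_block[OF i r assms(2,3)] depth_block[OF i] depth_block[OF i r] assms(2,3)
      by simp
  next
    case False
    have "depth ((k + 1) * (i + 1)) = 2 * (i + 1)"
    proof (cases "i + 1 < ell")
      case True
      then show ?thesis using depth_block[of "i + 1" 0] by simp
    next
      case False
      then have "i + 1 = ell" using i by simp
      then show ?thesis using depth_tail[of 0] by simp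
    qed
    then show ?thesis using False q delta_block[OF i r assms(2,3)] depth_block[OF i r] by auto
  qed
  then show "depth (\<delta> q a) \<le> Suc (depth q)"
    and "even (depth (\<delta> q a)) \<longleftrightarrow> odd (depth q)"
    using depth_zero by auto
qed

lemma depth_delta_word:
  assumes "set v \<subseteq> {1..k}" "depth q + length v \<le> 2 * ell"
  shows "depth (delta_word \<delta> q v) \<le> depth q + length v
    \<and> (even (depth (delta_word \<delta> q v)) \<longleftrightarrow> even (depth q + length v))"
  using assms
proof (induction v arbitrary: q)
  case (Cons a v)
  have a: "1 \<le> a" "a \<le> k" and v: "set v \<subseteq> {1..k}" using Cons.prems(1) by auto
  have "depth q < 2 * ell" using Cons.prems(2) by simp
  note step = depth_delta[OF this a]
  have "depth (\<delta> q a) + length v \<le> 2 * ell" using step(1) Cons.prems(2) by simp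
  from Cons.IH[OF v this] step show ?case by auto
qed simp

lemma delta_word_separates:
  assumes "set v \<subseteq> {1..k}" "odd (depth p + depth q)"
    "depth p + length v \<le> 2 * ell" "depth q + length v \<le> 2 * ell"
  shows "delta_word \<delta> p v \<noteq> delta_word \<delta> q v"
  using depth_delta_word[OF assms(1,3)] depth_delta_word[OF assms(1,4)] assms(2) by auto

lemma delta_last: "\<delta> (n - 1) a = 0"
proof -
  have "(k + 1) * ell \<le> n - 1" "\<not> n - 1 \<le> n - 2" using blocks_less n_gt by simp_all
  then show ?thesis using delta_tail[of "n - 1" a] by simp
qed

lemma delta_zero:
  assumes "1 \<le> a" "a \<le> k"
  shows "\<delta> 0 a = a"
  using delta_block[of 0 0 a] ell_pos assms by simp

lemma delta_leaf:
  assumes "2 \<le> j" "j \<le> k" "1 \<le> a" "a \<le> k"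
  shows "\<delta> j a = 0"
  using delta_block[of 0 j a] ell_pos assms by simp

lemma last_has_predecessor: "\<exists>z<n. \<delta> z 1 = n - 1"
proof (cases "(k + 1) * ell \<le> n - 2")
  case True
  then have "\<delta> (n - 2) 1 = n - 1" using delta_tail[of "n - 2"] n_gt by simp
  then show ?thesis using n_gt by (intro exI[of _ "n - 2"]) simp
next
  case False
  then have last: "(k + 1) * ell = n - 1" using blocks_less by simp
  obtain j where j: "ell = Suc j" using ell_pos by (cases ell) simp_all
  have "\<delta> ((k + 1) * j + 1) 1 = (k + 1) * (j + 1)"
    using delta_block[of j 1 1] j two_le_k by simp
  moreover have "(k + 1) * j + 1 < (k + 1) * ell"
    using j two_le_k by (intro block_less) simp_all
  ultimately show ?thesis using last j blocks_less by (intro exI[of _ "(k + 1) * j + 1"]) simp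
qed

lemma dead_state_not_merged:
  assumes "x \<noteq> 0" "\<And>a. 1 \<le> a \<Longrightarrow> a \<le> k \<Longrightarrow> \<delta> x a = 0"
    and "set v \<subseteq> {1..k}" "length v \<le> 2 * ell"
  shows "delta_word \<delta> 0 v \<noteq> delta_word \<delta> x v"
proof (cases v)
  case (Cons a u)
  have a: "1 \<le> a" "a \<le> k" and u: "set u \<subseteq> {1..k}" using assms(3) Cons by auto
  have "delta_word \<delta> a u \<noteq> delta_word \<delta> 0 u"
    using delta_word_separates[OF u] depth_letter[OF a] depth_zero assms(4) Cons by simp
  then show ?thesis using Cons delta_zero[OF a] assms(2)[OF a] by simp
qed (use assms(1) in simp)

lemma reset_word_length_ge:
  assumes "reset_word (X_states n) (X_alphabet k) \<delta> w"
  shows "2 * ell + 2 \<le> length w"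
proof (rule ccontr)
  assume short: "\<not> 2 * ell + 2 \<le> length w"
  have letters: "set w \<subseteq> {1..k}"
    using assms by (simp add: reset_word_def X_alphabet_def)
  have merges: "delta_word \<delta> p w = delta_word \<delta> q w" if "p < n" "q < n" for p q
    using reset_word_merges[OF assms, of p q] that by (simp add: X_states_def)
  show False
  proof (cases w)
    case Nil
    then show False using merges[of 0 "n - 1"] n_gt by simp
  next
    case (Cons a v)
    have a: "1 \<le> a" "a \<le> k" and v: "set v \<subseteq> {1..k}" "length v \<le> 2 * ell"
      using letters short Cons by auto
    have last: "delta_word \<delta> (n - 1) w = delta_word \<delta> 0 v" using Cons delta_last by simp
    show False
    proof (cases "a = 1")
      case True
      obtain z where "z < n" "\<delta> z 1 = n - 1" using last_has_predecessor by blast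
      then have "delta_word \<delta> z w = delta_word \<delta> (n - 1) v" using Cons True by simp
      moreover have "delta_word \<delta> 0 v \<noteq> delta_word \<delta> (n - 1) v"
        by (rule dead_state_not_merged) (use delta_last n_gt v in simp_all)
      ultimately show False using merges[of z "n - 1"] last \<open>z < n\<close> by simp
    next
      case False
      have "delta_word \<delta> 0 w = delta_word \<delta> a v" using Cons delta_zero[OF a] by simp
      moreover have "delta_word \<delta> 0 v \<noteq> delta_word \<delta> a v"
        by (rule dead_state_not_merged) (use delta_leaf a False v in simp_all)
      ultimately show False using merges[of 0 "n - 1"] last n_gt by simp
    qed
  qed
qed

text \<open>The path of a_1-transitions from 0 through all blocks: \<open>spine e\<close> is its state of depth e.\<close>

definition spine :: "nat \<Rightarrow> nat" where
  "spine e = (k + 1) * (e div 2) + e mod 2"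

lemma delta_spine:
  assumes "e < 2 * ell"
  shows "\<delta> (spine e) 1 = spine (Suc e)"
proof -
  have "e div 2 < ell" "e mod 2 \<le> k" "1 \<le> k" using assms two_le_k by simp_all
  note step = delta_block[OF this(1,2) order_refl this(3)]
  show ?thesis
  proof (cases "even e")
    case True
    then have "Suc e div 2 = e div 2" "Suc e mod 2 = 1" "e mod 2 = 0" by presburger+
    then show ?thesis using step two_le_k by (simp add: spine_def)
  next
    case False
    then have "Suc e div 2 = e div 2 + 1" "Suc e mod 2 = 0" "e mod 2 = 1" by presburger+
    then show ?thesis using step two_le_k by (simp add: spine_def)
  qed
qed

lemma delta_word_spine:
  "e + m \<le> 2 * ell \<Longrightarrow> delta_word \<delta> (spine e) (replicate m 1) = spine (e + m)"
proof (induction m arbitrary: e)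
  case (Suc m)
  then show ?case using delta_spine[of e] Suc.IH[of "Suc e"] by simp
qed simp

lemma delta_spine_end:
  assumes "2 * ell - 1 \<le> e" "e \<le> 2 * ell"
  shows "\<delta> (spine e) 2 = 0"
proof (cases "e = 2 * ell")
  case True
  then show ?thesis using delta_tail[of "(k + 1) * ell" 2] by (simp add: spine_def)
next
  case False
  then have "e = 2 * (ell - 1) + 1" using assms ell_pos by simp
  then have "spine e = (k + 1) * (ell - 1) + 1" by (simp add: spine_def)
  then show ?thesis using delta_block[of "ell - 1" 1 2] ell_pos two_le_k by simp
qed

lemma delta_word_two_one: "delta_word \<delta> q [2, 1] \<in> {spine 0, spine 1}"
proof -
  have zero_one: "\<delta> 0 1 = spine 1" using delta_zero[of 1] two_le_k by (simp add: spine_def)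
  show ?thesis
  proof (cases "q < (k + 1) * ell")
    case True
    then obtain i r where i: "i < ell" and r: "r \<le> k" and q: "q = (k + 1) * i + r"
      by (rule obtain_block)
    show ?thesis
    proof (cases "r = 0")
      case True
      then have "\<delta> q 2 = (k + 1) * i + 2" using q delta_block[OF i r, of 2] two_le_k by simp
      moreover have "\<delta> ((k + 1) * i + 2) 1 = 0" using delta_block[OF i, of 2 1] two_le_k by simp
      ultimately show ?thesis by (simp add: spine_def)
    next
      case False
      then have "\<delta> q 2 = 0" using q delta_block[OF i r, of 2] two_le_k by simp
      then show ?thesis using zero_one by simp
    qed
  next
    case False
    then have "\<delta> q 2 = 0" using delta_tail[of q 2] by simp
    then show ?thesis using zero_one by simp
  qed
qed

lemma explicit_reset_word:
  "reset_word (X_states n) (X_alphabet k) \<delta> (2 # 1 # replicate (2 * ell - 1) 1 @ [2])"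
proof (rule reset_wordI)
  fix q
  obtain e where e: "e \<le> 1" "delta_word \<delta> q [2, 1] = spine e"
    using delta_word_two_one[of q] by auto
  have "delta_word \<delta> (spine e) (replicate (2 * ell - 1) 1) = spine (e + (2 * ell - 1))"
    using e(1) ell_pos by (intro delta_word_spine) simp
  moreover have "\<delta> (spine (e + (2 * ell - 1))) 2 = 0"
    using e(1) ell_pos by (intro delta_spine_end) simp_all
  ultimately show "delta_word \<delta> q (2 # 1 # replicate (2 * ell - 1) 1 @ [2]) = 0"
    using e(2) by simp
qed (use two_le_k n_gt in \<open>auto simp: X_alphabet_def X_states_def\<close>)

end

theorem theorem7:
  fixes n k :: nat
  assumes "k \<ge> 3" and "n \<ge> k + 2"
  shows "synchronizing (X_states n) (X_alphabet k) (X_delta n k)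
     \<and> reset_threshold (X_states n) (X_alphabet k) (X_delta n k) = 2 * X_ell n k + 2
     \<and> 2 * X_ell n k + 2 = 2 * nat \<lceil>real n / real (k + 1)\<rceil>"
proof -
  interpret X_automaton n k using assms by unfold_locales simp_all
  let ?w = "2 # 1 # replicate (2 * X_ell n k - 1) 1 @ [2::nat]"
  have len: "length ?w = 2 * X_ell n k + 2" using ell_pos by simp
  have "reset_threshold (X_states n) (X_alphabet k) (X_delta n k) = length ?w"
    using explicit_reset_word reset_word_length_ge len by (intro reset_threshold_eqI) simp_all
  moreover have "synchronizing (X_states n) (X_alphabet k) (X_delta n k)"
    using explicit_reset_word by (auto simp: synchronizing_def)
  ultimately show ?thesis using len Suc_ell by simp
qed

end
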